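(* There exists an infinite sequence $\{(G_n,\tau_n)\}_{n\ge1}$ of finite simple graphs $G_n$ with threshold assignments $\tau_n$ such that $|G_n|\to\infty$, $\epsilon(G_n)/|G_n| = o(\overline{\tau_n})$, and $$\lim_{n\to\infty}\frac{Ldyn_{\overline{\tau_n}}(G_n)}{|G_n|}=1.$$
   Context: For a graph $G$, $|G|$ is the number of vertices and $\epsilon(G)=|E(G)|/|G|$. A threshold assignment is a function $\tau:V(G)\to\{0,1,2,\dots\}$ with $0\le\tau(v)\le deg_G(v)$ for all $v$; its average is $\overline{\tau}=\sum_v\tau(v)/|G|$. A set $D\subseteq V(G)$ is a $\tau$-dynamo if $V(G)$ can be partitioned into $D_0=D,D_1,\dots,D_k$ such that for each $1\le i\le k$, $D_i$ consists of all vertices not in $D_0\cup\dots\cup D_{i-1}$ having at least $\tau(v)$ neighbors in $D_0\cup\dots\cup D_{i-1}$; $dyn_\tau(G)$ is the minimum size of a $\tau$-dynamo. For $t>0$, $Ldyn_t(G)=\max\{dyn_\tau(G): \overline{\tau}\le t\}$. *)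

theory Defs
  imports Complex_Main "HOL-Library.Landau_Symbols"
begin

definition simple_graph :: "'a set \<Rightarrow> ('a \<Rightarrow> 'a \<Rightarrow> bool) \<Rightarrow> bool" where
  "simple_graph V E \<longleftrightarrow> finite V \<and> (\<forall>u v. E u v \<longrightarrow> u \<in> V \<and> v \<in> V)
     \<and> (\<forall>u v. E u v \<longrightarrow> E v u) \<and> (\<forall>v. \<not> E v v)"

definition degree :: "'a set \<Rightarrow> ('a \<Rightarrow> 'a \<Rightarrow> bool) \<Rightarrow> 'a \<Rightarrow> nat" where
  "degree V E v = card {u \<in> V. E v u}"

definition edge_set :: "'a set \<Rightarrow> ('a \<Rightarrow> 'a \<Rightarrow> bool) \<Rightarrow> 'a set set" where
  "edge_set V E = {{u, v} | u v. u \<in> V \<and> v \<in> V \<and> E u v}"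

definition eps :: "'a set \<Rightarrow> ('a \<Rightarrow> 'a \<Rightarrow> bool) \<Rightarrow> real" where
  "eps V E = real (card (edge_set V E)) / real (card V)"

definition threshold :: "'a set \<Rightarrow> ('a \<Rightarrow> 'a \<Rightarrow> bool) \<Rightarrow> ('a \<Rightarrow> nat) \<Rightarrow> bool" where
  "threshold V E \<tau> \<longleftrightarrow> (\<forall>v \<in> V. \<tau> v \<le> degree V E v)"

definition avg_thr :: "'a set \<Rightarrow> ('a \<Rightarrow> nat) \<Rightarrow> real" where
  "avg_thr V \<tau> = real (\<Sum>v\<in>V. \<tau> v) / real (card V)"

text \<open>One round of activation: D_0 \<union> ... \<union> D_{i-1} \<mapsto> D_0 \<union> ... \<union> D_i.\<close>
definition activate :: "'a set \<Rightarrow> ('a \<Rightarrow> 'a \<Rightarrow> bool) \<Rightarrow> ('a \<Rightarrow> nat) \<Rightarrow> 'a set \<Rightarrow> 'a set" where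
  "activate V E \<tau> A = A \<union> {v \<in> V - A. card {u \<in> A. E v u} \<ge> \<tau> v}"

definition is_dynamo :: "'a set \<Rightarrow> ('a \<Rightarrow> 'a \<Rightarrow> bool) \<Rightarrow> ('a \<Rightarrow> nat) \<Rightarrow> 'a set \<Rightarrow> bool" where
  "is_dynamo V E \<tau> D \<longleftrightarrow> D \<subseteq> V \<and> (\<exists>k. (activate V E \<tau> ^^ k) D = V)"

definition dyn :: "'a set \<Rightarrow> ('a \<Rightarrow> 'a \<Rightarrow> bool) \<Rightarrow> ('a \<Rightarrow> nat) \<Rightarrow> nat" where
  "dyn V E \<tau> = Min {card D | D. is_dynamo V E \<tau> D}"

definition Ldyn :: "'a set \<Rightarrow> ('a \<Rightarrow> 'a \<Rightarrow> bool) \<Rightarrow> real \<Rightarrow> nat" where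
  "Ldyn V E t = Max {dyn V E \<tau> | \<tau>. threshold V E \<tau> \<and> avg_thr V \<tau> \<le> t}"

end

theory Submission
  imports Defs
begin

text \<open>Take the complete graph \<open>K\<^sub>m\<close> with the unanimity threshold \<open>\<tau> \<equiv> m - 1\<close>.
  A vertex outside an active set \<open>A\<close> sees exactly \<open>|A|\<close> active neighbours, so no set of
  fewer than \<open>m - 1\<close> vertices ever grows. Hence \<open>dyn\<^sub>\<tau>(K\<^sub>m)\<close>, and with it the \<open>Ldyn\<close> at the
  average \<open>m - 1\<close> of \<open>\<tau>\<close>, lies between \<open>m - 1\<close> and \<open>m\<close>. Meanwhile \<open>\<epsilon>(K\<^sub>m)/m \<le> 1\<close> stays
  bounded while the average threshold \<open>m - 1\<close> tends to infinity.\<close>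

lemma is_dynamo_whole: "is_dynamo V E \<tau> V"
  unfolding is_dynamo_def by (metis funpow_0 order_refl)

lemma card_dynamo_le: "finite V \<Longrightarrow> is_dynamo V E \<tau> D \<Longrightarrow> card D \<le> card V"
  by (simp add: is_dynamo_def card_mono)

lemma dyn_le_card:
  assumes "finite V"
  shows "dyn V E \<tau> \<le> card V"
proof -
  have "finite {card D | D. is_dynamo V E \<tau> D}"
    by (rule finite_subset[of _ "{..card V}"]) (auto simp: card_dynamo_le[OF assms])
  moreover have "card V \<in> {card D | D. is_dynamo V E \<tau> D}"
    using is_dynamo_whole by blast
  ultimately show ?thesis unfolding dyn_def by (rule Min_le)
qed

lemma funpow_activate_fixpoint:
  "activate V E \<tau> A = A \<Longrightarrow> (activate V E \<tau> ^^ k) A = A"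
  by (induction k) simp_all

lemma dynamo_fixpoint_eq:
  assumes "is_dynamo V E \<tau> D" and "activate V E \<tau> D = D"
  shows "D = V"
  using assms funpow_activate_fixpoint[OF assms(2)] by (auto simp: is_dynamo_def)

lemma
  assumes "finite V" and "threshold V E \<tau>" and "avg_thr V \<tau> \<le> t"
  shows dyn_le_Ldyn: "dyn V E \<tau> \<le> Ldyn V E t"
    and Ldyn_le_card: "Ldyn V E t \<le> card V"
proof -
  let ?S = "{dyn V E \<sigma> | \<sigma>. threshold V E \<sigma> \<and> avg_thr V \<sigma> \<le> t}"
  have S_finite: "finite ?S"
    by (rule finite_subset[of _ "{..card V}"]) (use dyn_le_card[OF assms(1)] in auto)
  have dyn_in_S: "dyn V E \<tau> \<in> ?S"
    using assms(2,3) by blast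
  show "dyn V E \<tau> \<le> Ldyn V E t"
    unfolding Ldyn_def using S_finite dyn_in_S by (rule Max_ge)
  show "Ldyn V E t \<le> card V"
    unfolding Ldyn_def using S_finite dyn_in_S dyn_le_card[OF assms(1)]
    by (intro Max.boundedI) auto
qed

lemma card_edge_set_le:
  assumes "finite V"
  shows "card (edge_set V E) \<le> card V * card V"
proof -
  have "edge_set V E \<subseteq> (\<lambda>(u, v). {u, v}) ` (V \<times> V)"
    by (auto simp: edge_set_def)
  hence "card (edge_set V E) \<le> card ((\<lambda>(u, v). {u, v}) ` (V \<times> V))"
    using assms by (intro card_mono) auto
  also have "\<dots> \<le> card (V \<times> V)"
    by (rule card_image_le) (use assms in simp)
  finally show ?thesis
    by (simp add: card_cartesian_product)
qed

lemma eps_div_card_le_1: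
  assumes "finite V"
  shows "eps V E / real (card V) \<le> 1"
proof -
  have "real (card (edge_set V E)) \<le> real (card V) * real (card V)"
    using card_edge_set_le[OF assms] by (metis of_nat_le_iff of_nat_mult)
  thus ?thesis
    by (cases "card V = 0") (simp_all add: eps_def divide_le_eq_1)
qed

lemma eps_div_card_bigo_1:
  assumes "\<And>n. finite (V n)"
  shows "(\<lambda>n. eps (V n) (E n) / real (card (V n))) \<in> O[F](\<lambda>_. 1)"
  using eps_div_card_le_1[OF assms]
  by (intro bigoI[of _ 1] always_eventually) (simp add: eps_def)

definition complete_graph :: "nat \<Rightarrow> nat \<Rightarrow> nat \<Rightarrow> bool" where
  "complete_graph m u v \<longleftrightarrow> u < m \<and> v < m \<and> u \<noteq> v"

lemma simple_graph_complete_graph: "simple_graph {0..<m} (complete_graph m)"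
  by (auto simp: simple_graph_def complete_graph_def)

lemma degree_complete_graph:
  assumes "v < m"
  shows "degree {0..<m} (complete_graph m) v = m - 1"
proof -
  have "{u \<in> {0..<m}. complete_graph m v u} = {0..<m} - {v}"
    using assms by (auto simp: complete_graph_def)
  thus ?thesis
    using assms by (simp add: degree_def)
qed

lemma threshold_complete_graph: "threshold {0..<m} (complete_graph m) (\<lambda>_. m - 1)"
  by (simp add: threshold_def degree_complete_graph)

lemma avg_thr_const: "0 < m \<Longrightarrow> avg_thr {0..<m::nat} (\<lambda>_. c) = real c"
  by (auto simp: avg_thr_def)

lemma activate_complete_graph_small:
  assumes "A \<subseteq> {0..<m}" and "card A + 1 < m"
  shows "activate {0..<m} (complete_graph m) (\<lambda>_. m - 1) A = A"
proof -
  have "{u \<in> A. complete_graph m v u} = A" if "v \<in> {0..<m} - A" for v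
    using assms(1) that by (auto simp: complete_graph_def)
  thus ?thesis
    using assms(2) by (auto simp: activate_def)
qed

lemma dyn_complete_graph_ge: "m - 1 \<le> dyn {0..<m} (complete_graph m) (\<lambda>_. m - 1)"
proof -
  have "m - 1 \<le> card D" if "is_dynamo {0..<m} (complete_graph m) (\<lambda>_. m - 1) D" for D
  proof (rule ccontr)
    assume "\<not> m - 1 \<le> card D"
    hence small: "card D + 1 < m"
      by linarith
    have "D \<subseteq> {0..<m}"
      using that by (simp add: is_dynamo_def)
    hence "D = {0..<m}"
      using small by (intro dynamo_fixpoint_eq[OF that] activate_complete_graph_small)
    with small show False
      by simp
  qed
  moreover have "finite {card D | D. is_dynamo {0..<m} (complete_graph m) (\<lambda>_. m - 1) D}"
    by (rule finite_subset[of _ "{..m}"]) (auto dest: card_dynamo_le[rotated])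
  moreover have "{card D | D. is_dynamo {0..<m} (complete_graph m) (\<lambda>_. m - 1) D} \<noteq> {}"
    using is_dynamo_whole by blast
  ultimately show ?thesis
    unfolding dyn_def by (auto simp: Min_ge_iff)
qed

lemma Ldyn_complete_graph:
  fixes m :: nat
  defines "L \<equiv> Ldyn {0..<m} (complete_graph m) (avg_thr {0..<m} (\<lambda>_. m - 1))"
  shows "m - 1 \<le> L" and "L \<le> m"
  unfolding L_def
  using dyn_complete_graph_ge[of m]
    dyn_le_Ldyn[OF _ threshold_complete_graph order_refl]
    Ldyn_le_card[OF _ threshold_complete_graph order_refl]
  by (auto intro: order_trans)

lemma Ldyn_complete_graph_ratio_tendsto:
  "(\<lambda>m. real (Ldyn {0..<m} (complete_graph m) (avg_thr {0..<m} (\<lambda>_. m - 1))) / real m)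
     \<longlonglongrightarrow> 1"
proof (rule real_tendsto_sandwich)
  let ?L = "\<lambda>m. Ldyn {0..<m} (complete_graph m) (avg_thr {0..<m} (\<lambda>_. m - 1))"
  show "\<forall>\<^sub>F m in sequentially. 1 - 1 / real m \<le> real (?L m) / real m"
  proof (rule eventually_sequentiallyI[of 1])
    fix m :: nat
    assume "1 \<le> m"
    hence "1 - 1 / real m = real (m - 1) / real m"
      by (simp add: field_simps of_nat_diff)
    also have "\<dots> \<le> real (?L m) / real m"
      using Ldyn_complete_graph(1)[of m] by (intro divide_right_mono) simp_all
    finally show "1 - 1 / real m \<le> real (?L m) / real m" .
  qed
  have "real (?L m) / real m \<le> 1" for m
    using Ldyn_complete_graph(2)[of m] by (cases "m = 0") (simp_all add: divide_le_eq_1)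
  thus "\<forall>\<^sub>F m in sequentially. real (?L m) / real m \<le> 1"
    by (intro always_eventually allI)
  show "(\<lambda>m. 1 - 1 / real m) \<longlonglongrightarrow> 1"
    using tendsto_diff[OF tendsto_const lim_1_over_n] by simp
qed simp

theorem proposition3:
  shows "\<exists>(N :: nat \<Rightarrow> nat) (E :: nat \<Rightarrow> nat \<Rightarrow> nat \<Rightarrow> bool) (\<tau> :: nat \<Rightarrow> nat \<Rightarrow> nat).
    (\<forall>n. simple_graph {0..<N n} (E n) \<and> threshold {0..<N n} (E n) (\<tau> n)) \<and>
    filterlim N at_top sequentially \<and>
    (\<lambda>n. eps {0..<N n} (E n) / real (N n)) \<in> o[sequentially](\<lambda>n. avg_thr {0..<N n} (\<tau> n)) \<and>
    (\<lambda>n. real (Ldyn {0..<N n} (E n) (avg_thr {0..<N n} (\<tau> n))) / real (N n)) \<longlonglongrightarrow> 1"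
proof (intro exI conjI allI)
  let ?N = "\<lambda>n::nat. n + 2" and ?E = "\<lambda>n. complete_graph (n + 2)"
    and ?\<tau> = "\<lambda>n (_::nat). n + 2 - 1"
  show "simple_graph {0..<?N n} (?E n)" "threshold {0..<?N n} (?E n) (?\<tau> n)" for n
    using simple_graph_complete_graph threshold_complete_graph by blast+
  show "filterlim ?N at_top sequentially"
    by (rule filterlim_add_const_nat_at_top)
  have "(\<lambda>n. eps {0..<?N n} (?E n) / real (?N n)) \<in> O(\<lambda>_. 1)"
    using eps_div_card_bigo_1[of "\<lambda>n. {0..<n + 2::nat}"] by simp
  moreover have "(\<lambda>_. 1) \<in> o(\<lambda>n. 1 + real n :: real)"
    unfolding smallomega_iff_smallo[symmetric] smallomega_1_conv_filterlim
    by (intro filterlim_at_top_imp_at_infinity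
        filterlim_tendsto_add_at_top[OF tendsto_const filterlim_real_sequentially])
  moreover have "avg_thr {0..<?N n} (?\<tau> n) = 1 + real n" for n
    by (simp add: avg_thr_const)
  ultimately show "(\<lambda>n. eps {0..<?N n} (?E n) / real (?N n)) \<in> o(\<lambda>n. avg_thr {0..<?N n} (?\<tau> n))"
    by (simp add: landau_o.big_small_trans)
  show "(\<lambda>n. real (Ldyn {0..<?N n} (?E n) (avg_thr {0..<?N n} (?\<tau> n))) / real (?N n)) \<longlonglongrightarrow> 1"
    using LIMSEQ_ignore_initial_segment[OF Ldyn_complete_graph_ratio_tendsto, of 2] by simp
qed

end
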